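(* For every point $y\in GZ(\lambda)$ there exists a unique enhanced Gelfand--Zetlin pattern $P$ with top row $\lambda$ such that $y\in C_P$.
   Context: Let $\lambda=(\lambda_1\ge\dots\ge\lambda_n)$ be a partition. Coordinates $y_{ij}$ ($i,j\ge1$, $i+j\le n$) on $\mathbb{R}^{n(n-1)/2}$, with $y_{0j}=\lambda_{n+1-j}$; $GZ(\lambda)$ is defined by $y_{i-1,j}\le y_{ij}\le y_{i-1,j+1}$. A GZ pattern with top row $\lambda$ is an integer array $a_{ij}$, $0\le i\le n-1$, $1\le j\le n-i$, with $a_{0j}=\lambda_{n+1-j}$ and $a_{i-1,j}\le a_{ij}\le a_{i-1,j+1}$. An enhanced GZ pattern is such an array with encircled entries and edges (each joining $a_{ij}$, $i\ge1$, with $a_{i-1,j}$ or $a_{i-1,j+1}$) such that: (1) row $0$ entries are encircled; (2) joined entries are equal, the lower one encircled; (3) for $i\ge1$: both $a_{ij},a_{i,j+1}$ are joined to $a_{i-1,j+1}$ iff both are joined to $a_{i+1,j}$; (4) if $a_{0j}=a_{0,j+1}$ then $a_{1j}$ is encircled and joined to both; (5) if $a_{i-1,j}<a_{i-1,j+1}$ and $a_{ij}=a_{i-1,j}$, then $a_{ij}$ is encircled and joined to $a_{i-1,j}$; (6) if $a_{i-1,j}<a_{i-1,j+1}$, $a_{ij}=a_{i-1,j+1}$, $a_{ij}$ encircled, then joined to $a_{i-1,j+1}$; (7) if $a_{i-1,j}=a_{i-1,j+1}=a_{ij}$ and the two upper entries are connected by a path of edges, then $a_{ij}$ is encircled and joined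 to both; (8) if $a_{i-1,j}=a_{i-1,j+1}=a_{ij}$ and $a_{ij}$ is encircled, it is joined to at least one of them. Cell $C_P$: for each $i\ge1$ impose: if $a_{ij}$ is joined to $a_{i-1,j}$ (resp. $a_{i-1,j+1}$), then $y_{ij}=y_{i-1,j}$ (resp. $y_{ij}=y_{i-1,j+1}$); if no edge goes up from $a_{ij}$ and it is encircled, $y_{ij}=a_{ij}$; if no edge goes up and it is not encircled, impose $a_{ij}-1<y_{ij}$ if $a_{ij}-a_{i-1,j}\ge2$, else $y_{i-1,j}<y_{ij}$, and $y_{ij}<y_{i-1,j+1}$ if $a_{i-1,j+1}=a_{ij}$, else $y_{ij}<a_{ij}$. Let $\widehat{C_P}$ be the set so defined, $L$ its affine span, and $C_P=\widehat{C_P}\cap(GZ(\lambda)\cap L)^0$, where $(\cdot)^0$ is the relative interior in $L$. *)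

theory Defs
  imports Complex_Main
begin

text \<open>The partition is lam :: nat => int, with parts lam 1, ..., lam n.
  Points of R^(n(n-1)/2) are functions y :: nat => nat => real vanishing outside the
  index set {(i,j). i >= 1, j >= 1, i + j <= n}.\<close>

definition coord_dom :: "nat \<Rightarrow> nat \<Rightarrow> nat \<Rightarrow> bool" where
  "coord_dom n i j \<longleftrightarrow> 1 \<le> i \<and> 1 \<le> j \<and> i + j \<le> n"

definition pts :: "nat \<Rightarrow> (nat \<Rightarrow> nat \<Rightarrow> real) set" where
  "pts n = {y. \<forall>i j. \<not> coord_dom n i j \<longrightarrow> y i j = 0}"

definition ext :: "nat \<Rightarrow> (nat \<Rightarrow> int) \<Rightarrow> (nat \<Rightarrow> nat \<Rightarrow> real) \<Rightarrow> nat \<Rightarrow> nat \<Rightarrow> real" where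
  "ext n lam y i j = (if i = 0 then real_of_int (lam (n + 1 - j)) else y i j)"

definition GZ :: "nat \<Rightarrow> (nat \<Rightarrow> int) \<Rightarrow> (nat \<Rightarrow> nat \<Rightarrow> real) set" where
  "GZ n lam = {y \<in> pts n. \<forall>i j. coord_dom n i j \<longrightarrow>
      ext n lam y (i - 1) j \<le> y i j \<and> y i j \<le> ext n lam y (i - 1) (j + 1)}"

definition pat_dom :: "nat \<Rightarrow> nat \<Rightarrow> nat \<Rightarrow> bool" where
  "pat_dom n i j \<longleftrightarrow> 1 \<le> j \<and> i + j \<le> n"

text \<open>An enhanced pattern: entries, encircled entries, and edges.
  jl i j: a_{ij} is joined to a_{i-1,j};  jr i j: a_{ij} is joined to a_{i-1,j+1}.
  All data are normalised to be trivial outside the index set, so that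
  equality of patterns is HOL equality.\<close>
record epat =
  ent :: "nat \<Rightarrow> nat \<Rightarrow> int"
  circ :: "nat \<Rightarrow> nat \<Rightarrow> bool"
  jl :: "nat \<Rightarrow> nat \<Rightarrow> bool"
  jr :: "nat \<Rightarrow> nat \<Rightarrow> bool"

definition GZ_pattern :: "nat \<Rightarrow> (nat \<Rightarrow> int) \<Rightarrow> (nat \<Rightarrow> nat \<Rightarrow> int) \<Rightarrow> bool" where
  "GZ_pattern n lam a \<longleftrightarrow>
     (\<forall>i j. \<not> pat_dom n i j \<longrightarrow> a i j = 0) \<and>
     (\<forall>j. 1 \<le> j \<and> j \<le> n \<longrightarrow> a 0 j = lam (n + 1 - j)) \<and>
     (\<forall>i j. 1 \<le> i \<and> pat_dom n i j \<longrightarrow> a (i - 1) j \<le> a i j \<and> a i j \<le> a (i - 1) (j + 1))"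

definition edge_rel :: "epat \<Rightarrow> ((nat \<times> nat) \<times> (nat \<times> nat)) set" where
  "edge_rel P = {((i, j), (i - 1, j)) | i j. 1 \<le> i \<and> jl P i j}
              \<union> {((i, j), (i - 1, j + 1)) | i j. 1 \<le> i \<and> jr P i j}"

definition connected_by_path :: "epat \<Rightarrow> nat \<times> nat \<Rightarrow> nat \<times> nat \<Rightarrow> bool" where
  "connected_by_path P p q \<longleftrightarrow> (p, q) \<in> (edge_rel P \<union> (edge_rel P)\<inverse>)\<^sup>*"

definition enhanced_GZ :: "nat \<Rightarrow> (nat \<Rightarrow> int) \<Rightarrow> epat \<Rightarrow> bool" where
  "enhanced_GZ n lam P \<longleftrightarrow>
     (let a = ent P in
     GZ_pattern n lam a \<and>
     (\<forall>i j. \<not> pat_dom n i j \<longrightarrow> \<not> circ P i j) \<and>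
     (\<forall>i j. \<not> (1 \<le> i \<and> pat_dom n i j) \<longrightarrow> \<not> jl P i j \<and> \<not> jr P i j) \<and>
     \<comment> \<open>(1)\<close>
     (\<forall>j. pat_dom n 0 j \<longrightarrow> circ P 0 j) \<and>
     \<comment> \<open>(2)\<close>
     (\<forall>i j. jl P i j \<longrightarrow> a i j = a (i - 1) j \<and> circ P i j) \<and>
     (\<forall>i j. jr P i j \<longrightarrow> a i j = a (i - 1) (j + 1) \<and> circ P i j) \<and>
     \<comment> \<open>(3)\<close>
     (\<forall>i j. 1 \<le> i \<and> pat_dom n i (j + 1) \<and> 1 \<le> j \<longrightarrow>
        ((jr P i j \<and> jl P i (j + 1)) \<longleftrightarrow> (jl P (i + 1) j \<and> jr P (i + 1) j))) \<and>
     \<comment> \<open>(4)\<close>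
     (\<forall>j. 1 \<le> j \<and> j + 1 \<le> n \<and> a 0 j = a 0 (j + 1) \<longrightarrow>
        circ P 1 j \<and> jl P 1 j \<and> jr P 1 j) \<and>
     \<comment> \<open>(5)\<close>
     (\<forall>i j. 1 \<le> i \<and> pat_dom n i j \<and> a (i - 1) j < a (i - 1) (j + 1) \<and> a i j = a (i - 1) j
        \<longrightarrow> circ P i j \<and> jl P i j) \<and>
     \<comment> \<open>(6)\<close>
     (\<forall>i j. 1 \<le> i \<and> pat_dom n i j \<and> a (i - 1) j < a (i - 1) (j + 1) \<and>
        a i j = a (i - 1) (j + 1) \<and> circ P i j \<longrightarrow> jr P i j) \<and>
     \<comment> \<open>(7)\<close>
     (\<forall>i j. 1 \<le> i \<and> pat_dom n i j \<and> a (i - 1) j = a (i - 1) (j + 1) \<and> a i j = a (i - 1) j \<and>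
        connected_by_path P (i - 1, j) (i - 1, j + 1) \<longrightarrow> circ P i j \<and> jl P i j \<and> jr P i j) \<and>
     \<comment> \<open>(8)\<close>
     (\<forall>i j. 1 \<le> i \<and> pat_dom n i j \<and> a (i - 1) j = a (i - 1) (j + 1) \<and> a i j = a (i - 1) j \<and>
        circ P i j \<longrightarrow> jl P i j \<or> jr P i j))"

definition cell_hat :: "nat \<Rightarrow> (nat \<Rightarrow> int) \<Rightarrow> epat \<Rightarrow> (nat \<Rightarrow> nat \<Rightarrow> real) set" where
  "cell_hat n lam P = {y \<in> pts n. \<forall>i j. coord_dom n i j \<longrightarrow>
     (let a = ent P; Y = ext n lam y in
      (jl P i j \<longrightarrow> y i j = Y (i - 1) j) \<and>
      (jr P i j \<longrightarrow> y i j = Y (i - 1) (j + 1)) \<and>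
      (\<not> jl P i j \<and> \<not> jr P i j \<and> circ P i j \<longrightarrow> y i j = real_of_int (a i j)) \<and>
      (\<not> jl P i j \<and> \<not> jr P i j \<and> \<not> circ P i j \<longrightarrow>
         (if a i j - a (i - 1) j \<ge> 2 then real_of_int (a i j) - 1 < y i j else Y (i - 1) j < y i j) \<and>
         (if a (i - 1) (j + 1) = a i j then y i j < Y (i - 1) (j + 1) else y i j < real_of_int (a i j))))}"

definition aff_span :: "(nat \<Rightarrow> nat \<Rightarrow> real) set \<Rightarrow> (nat \<Rightarrow> nat \<Rightarrow> real) set" where
  "aff_span S = {y. \<exists>(m::nat) c v. (\<forall>k<m. v k \<in> S) \<and> (\<Sum>k<m. c k) = (1::real) \<and>
                     y = (\<lambda>i j. \<Sum>k<m. c k * v k i j)}"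

text \<open>Relative interior of S inside L (topology of coordinatewise / sup distance,
  equivalent to the Euclidean topology since only finitely many coordinates are nonzero).\<close>
definition rel_int_in :: "(nat \<Rightarrow> nat \<Rightarrow> real) set \<Rightarrow> (nat \<Rightarrow> nat \<Rightarrow> real) set \<Rightarrow> (nat \<Rightarrow> nat \<Rightarrow> real) set" where
  "rel_int_in L S = {x \<in> S. x \<in> L \<and> (\<exists>e>0. \<forall>z\<in>L. (\<forall>i j. \<bar>z i j - x i j\<bar> < e) \<longrightarrow> z \<in> S)}"

definition cell :: "nat \<Rightarrow> (nat \<Rightarrow> int) \<Rightarrow> epat \<Rightarrow> (nat \<Rightarrow> nat \<Rightarrow> real) set" where
  "cell n lam P = (let L = aff_span (cell_hat n lam P) in
                   cell_hat n lam P \<inter> rel_int_in L (GZ n lam \<inter> L))"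

end

theory Submission
  imports Defs
begin

(*
  Existence: read the pattern off y row by row. An entry joined to an upper neighbour copies
  it, an encircled entry without edges is the integer y_ij itself, and any other entry is the
  least integer for which the open-cell inequalities hold. Placing edges exactly at the ties
  of y and circles at these integers gives an enhanced pattern whose cell constraints y
  satisfies; every GZ inequality is then either an equation on the affine span of the cell
  or strict at y, so y is a relative interior point.

  Uniqueness: if y lies in C_P, moving simultaneously all coordinates that share a value v
  and an entry c <> v keeps the point in hat C_P for small moves, hence in GZ(lambda) by
  relative interiority. A tie y_ij = y_{i-1,j'} has to survive all these moves, so it can
  only join equal entries. Together with the axioms of enhanced patterns this makes the
  edges of P exactly the ties of y, after which the cell constraints force every entry and
  every circle: P is the pattern constructed for existence.
*)

lemma coord_dom_iff_pat_dom: "coord_dom n i j \<longleftrightarrow> 1 \<le> i \<and> pat_dom n i j"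
  by (auto simp: coord_dom_def pat_dom_def)

lemma ext_0 [simp]: "ext n lam y 0 j = of_int (lam (n + 1 - j))"
  by (simp add: ext_def)

lemma ext_pos [simp]: "1 \<le> i \<Longrightarrow> ext n lam z i j = z i j"
  by (simp add: ext_def)

lemma finite_coord_dom: "finite {(i, j). coord_dom n i j}"
  by (rule finite_subset[of _ "{..n} \<times> {..n}"]) (auto simp: coord_dom_def)

section \<open>The entry rule\<close>

text \<open>The entry \<open>a_ij\<close> forced by \<open>v = y_ij\<close>, where \<open>l = y_{i-1,j}\<close> and \<open>r = y_{i-1,j+1}\<close> are
  its upper neighbours and \<open>al\<close>, \<open>ar\<close> the entries above it.\<close>

definition next_entry :: "real \<Rightarrow> real \<Rightarrow> real \<Rightarrow> int \<Rightarrow> int \<Rightarrow> int" where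
  "next_entry l r v al ar =
     (if v = l then al else if v = r then ar
      else if v \<in> \<int> \<and> of_int al < v then \<lfloor>v\<rfloor>
      else if v < of_int al + 1 then (if al = ar then al else al + 1)
      else \<lfloor>v\<rfloor> + 1)"

lemma of_int_floor_eq_iff_Ints: "of_int \<lfloor>x\<rfloor> = (x :: real) \<longleftrightarrow> x \<in> \<int>"
  by (metis frac_eq_0_iff frac_def eq_iff_diff_eq_0)

lemma next_entry_bounds:
  assumes "l \<le> v" "v \<le> r" "l \<le> of_int al" "r \<le> of_int ar" "al \<le> ar"
  shows "al \<le> next_entry l r v al ar \<and> next_entry l r v al ar \<le> ar \<and> v \<le> of_int (next_entry l r v al ar)"
proof -
  have floor: "of_int \<lfloor>v\<rfloor> \<le> v" "v < of_int \<lfloor>v\<rfloor> + 1" by linarith+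
  consider "v = l" | "v = r" | "v \<noteq> l" "v < r" by (cases "v = r") (use assms in auto)
  then show ?thesis
  proof cases
    case 3
    have below_ar: "\<lfloor>v\<rfloor> < ar" using 3 assms floor by linarith
    show ?thesis
    proof (cases "v \<in> \<int> \<and> of_int al < v")
      case True
      then have "of_int \<lfloor>v\<rfloor> = v" by (simp add: of_int_floor_eq_iff_Ints)
      then show ?thesis using True 3 below_ar by (simp add: next_entry_def le_floor_iff)
    next
      case False
      show ?thesis
      proof (cases "v < of_int al + 1")
        case True
        then show ?thesis using False 3 assms by (auto simp: next_entry_def)
      next
        case high: False
        then have "next_entry l r v al ar = \<lfloor>v\<rfloor> + 1" using False 3 by (simp add: next_entry_def)
        moreover have "al < \<lfloor>v\<rfloor>" using high floor by linarith
        ultimately show ?thesis using below_ar floor by simp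
      qed
    qed
  qed (use assms in \<open>auto simp: next_entry_def\<close>)
qed

lemma next_entry_integer:
  "v \<noteq> l \<Longrightarrow> v \<noteq> r \<Longrightarrow> v \<in> \<int> \<Longrightarrow> of_int al < v \<Longrightarrow> next_entry l r v al ar = \<lfloor>v\<rfloor>"
  by (simp add: next_entry_def)

lemma next_entry_neq_left:
  assumes "v \<noteq> l" "v \<noteq> r" "al \<noteq> ar"
  shows "next_entry l r v al ar \<noteq> al"
  using assms by (auto simp: next_entry_def of_int_floor_eq_iff_Ints[symmetric]; linarith)

lemma next_entry_open:
  fixes al ar :: int
  assumes "l < v" "v < r" "\<not> (v \<in> \<int> \<and> of_int al < v)"
  defines "x \<equiv> next_entry l r v al ar"
  shows "(if 2 \<le> x - al then of_int x - 1 < v else l < v) \<and>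
         (if ar = x then v < r else v < of_int x)"
proof -
  have "v \<noteq> l" "v \<noteq> r" using assms(1,2) by auto
  then have x: "x = (if v < of_int al + 1 then (if al = ar then al else al + 1) else \<lfloor>v\<rfloor> + 1)"
    using assms(3) unfolding x_def next_entry_def by auto
  show ?thesis
  proof (cases "v < of_int al + 1")
    case True
    then have "x = (if al = ar then al else al + 1)" using x by simp
    then show ?thesis using True assms(1,2) by auto
  next
    case False
    then have "x = \<lfloor>v\<rfloor> + 1" using x by simp
    moreover have "v \<notin> \<int>" using False assms(3) by auto
    then have "of_int \<lfloor>v\<rfloor> < v"
      using of_int_floor_le[of v] of_int_floor_eq_iff_Ints[of v] by linarith
    ultimately show ?thesis using assms(1,2) by auto
  qed
qed

lemma next_entry_eqI:
  assumes "v \<noteq> l" "v \<noteq> r" "al \<le> x" "x \<le> ar" "v < of_int x"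
    and "2 \<le> x - al \<Longrightarrow> of_int x - 1 < v" and "x = al \<Longrightarrow> al = ar"
  shows "next_entry l r v al ar = x \<and> \<not> (v \<in> \<int> \<and> of_int al < v)"
proof -
  have floor: "of_int \<lfloor>v\<rfloor> \<le> v" "v < of_int \<lfloor>v\<rfloor> + 1" by linarith+
  have not_integer: "\<not> (v \<in> \<int> \<and> of_int al < v)"
  proof
    assume int: "v \<in> \<int> \<and> of_int al < v"
    then have v: "of_int \<lfloor>v\<rfloor> = v" by (simp add: of_int_floor_eq_iff_Ints)
    then have "al < \<lfloor>v\<rfloor>" "\<lfloor>v\<rfloor> < x" using int assms(5) by linarith+
    then show False using assms(6) v by linarith
  qed
  have "next_entry l r v al ar = x"
  proof (cases "v < of_int al + 1")
    case True
    then have "\<not> 2 \<le> x - al" using assms(6) by linarith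
    then have "x = al \<or> x = al + 1" using assms(3) by linarith
    then show ?thesis using True not_integer assms(1,2,4,7) by (auto simp: next_entry_def)
  next
    case False
    then have "2 \<le> x - al" using assms(5) by linarith
    then have "x = \<lfloor>v\<rfloor> + 1" using assms(5,6) floor by linarith
    then show ?thesis using False not_integer assms(1,2) by (simp add: next_entry_def)
  qed
  with not_integer show ?thesis by blast
qed

section \<open>Small perturbations\<close>

lemma eq_if_eventually_mult_le:
  fixes p q :: real
  assumes "\<forall>\<^sub>F t in nhds 0. t * p \<le> t * q"
  shows "p = q"
proof -
  obtain d where "d > 0" and d: "\<And>t. dist t 0 < d \<Longrightarrow> t * p \<le> t * q"
    using assms unfolding eventually_nhds_metric by blast
  then have "d / 2 * p \<le> d / 2 * q" "- (d / 2) * p \<le> - (d / 2) * q"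
    using d[of "d / 2"] d[of "- (d / 2)"] by auto
  then show ?thesis using \<open>d > 0\<close> by (simp add: mult_le_cancel_left)
qed

lemma eventually_perturbed_less:
  fixes a b x w :: real
  assumes "a < b"
  shows "\<forall>\<^sub>F t in nhds 0. a + t * x < b + t * w"
proof -
  have "((\<lambda>t. (b + t * w) - (a + t * x)) \<longlongrightarrow> (b + 0 * w) - (a + 0 * x)) (nhds 0)"
    by (intro tendsto_intros filterlim_ident)
  moreover have "0 < (b + 0 * w) - (a + 0 * x)" using assms by simp
  ultimately have "\<forall>\<^sub>F t in nhds 0. 0 < (b + t * w) - (a + t * x)"
    by (rule order_tendstoD(1))
  then show ?thesis by (rule eventually_mono) simp
qed

text \<open>Sup-distance neighbourhoods, the topology in which \<^const>\<open>rel_int_in\<close> is taken.\<close>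

definition near :: "(nat \<Rightarrow> nat \<Rightarrow> real) \<Rightarrow> (nat \<Rightarrow> nat \<Rightarrow> real) filter" where
  "near y = (INF e\<in>{0<..}. principal {z. \<forall>i j. \<bar>z i j - y i j\<bar> < e})"

lemma eventually_near:
  "eventually P (near y) \<longleftrightarrow> (\<exists>e>0. \<forall>z. (\<forall>i j. \<bar>z i j - y i j\<bar> < e) \<longrightarrow> P z)"
  unfolding near_def
proof (subst eventually_INF_base)
  fix a b :: real assume "a \<in> {0<..}" "b \<in> {0<..}"
  then show "\<exists>e\<in>{0<..}. principal {z. \<forall>i j. \<bar>z i j - y i j\<bar> < e}
      \<le> inf (principal {z. \<forall>i j. \<bar>z i j - y i j\<bar> < a}) (principal {z. \<forall>i j. \<bar>z i j - y i j\<bar> < b})"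
    by (intro bexI[of _ "min a b"]) auto
qed (auto simp: eventually_principal)

lemma rel_int_in_iff: "x \<in> rel_int_in L S \<longleftrightarrow> x \<in> S \<and> x \<in> L \<and> (\<forall>\<^sub>F z in near x. z \<in> L \<longrightarrow> z \<in> S)"
  by (auto simp: rel_int_in_def eventually_near)

lemma eventually_near_ext_less:
  assumes "ext n lam y p q < ext n lam y p' q'"
  shows "\<forall>\<^sub>F z in near y. ext n lam z p q < ext n lam z p' q'"
  unfolding eventually_near
proof (intro exI conjI allI impI)
  let ?e = "(ext n lam y p' q' - ext n lam y p q) / 2"
  show "?e > 0" using assms by simp
  fix z assume "\<forall>i j. \<bar>z i j - y i j\<bar> < ?e"
  then have "\<bar>ext n lam z p q - ext n lam y p q\<bar> < ?e" "\<bar>ext n lam z p' q' - ext n lam y p' q'\<bar> < ?e"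
    using \<open>?e > 0\<close> by (auto simp: ext_def)
  then show "ext n lam z p q < ext n lam z p' q'" by argo
qed

lemma eventually_nhds_0_near:
  assumes "eventually P (near y)" and "\<And>t i j. \<bar>f t i j - y i j\<bar> \<le> \<bar>t\<bar>"
  shows "\<forall>\<^sub>F t in nhds 0. P (f t)"
proof -
  obtain e where "e > 0" and e: "\<And>z. (\<forall>i j. \<bar>z i j - y i j\<bar> < e) \<Longrightarrow> P z"
    using assms(1) unfolding eventually_near by blast
  show ?thesis
    unfolding eventually_nhds_metric dist_real_def
  proof (intro exI[of _ e] conjI allI impI)
    fix t :: real assume "\<bar>t - 0\<bar> < e"
    then have "\<forall>i j. \<bar>f t i j - y i j\<bar> < e" using assms(2) by (metis diff_zero order_le_less_trans)
    then show "P (f t)" by (rule e)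
  qed (rule \<open>e > 0\<close>)
qed

section \<open>Affine spans and cell constraints\<close>

lemma aff_span_superset: "S \<subseteq> aff_span S"
  unfolding aff_span_def by (auto intro!: exI[of _ 1] exI[of _ "\<lambda>_. 1"])

lemma ext_affine_combination:
  assumes "(\<Sum>k<m. c k) = (1 :: real)"
  shows "ext n lam (\<lambda>i j. \<Sum>k<m. c k * v k i j) p q = (\<Sum>k<m. c k * ext n lam (v k) p q)"
  using assms by (simp add: ext_def flip: sum_distrib_right)

lemma aff_span_pts: "S \<subseteq> pts n \<Longrightarrow> aff_span S \<subseteq> pts n"
  unfolding aff_span_def pts_def by (fastforce intro!: sum.neutral)

lemma aff_span_ext_eq:
  assumes "z \<in> aff_span S" and "\<And>x. x \<in> S \<Longrightarrow> x i j = ext n lam x p q"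
  shows "z i j = ext n lam z p q"
proof -
  obtain m :: nat and c v where v: "\<forall>k<m. v k \<in> S" and c: "(\<Sum>k<m. c k) = (1 :: real)"
    and z: "z = (\<lambda>i j. \<Sum>k<m. c k * v k i j)"
    using assms(1) unfolding aff_span_def mem_Collect_eq by blast
  have "ext n lam z p q = (\<Sum>k<m. c k * ext n lam (v k) p q)"
    unfolding z by (rule ext_affine_combination[OF c])
  also have "\<dots> = z i j" unfolding z using v assms(2) by (intro sum.cong) auto
  finally show ?thesis by simp
qed

definition cell_hat_conds :: "nat \<Rightarrow> (nat \<Rightarrow> int) \<Rightarrow> epat \<Rightarrow> (nat \<Rightarrow> nat \<Rightarrow> real) \<Rightarrow> nat \<Rightarrow> nat \<Rightarrow> bool" where
  "cell_hat_conds n lam P z i j \<longleftrightarrow>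
     (let a = ent P; Z = ext n lam z in
      (jl P i j \<longrightarrow> z i j = Z (i - 1) j) \<and>
      (jr P i j \<longrightarrow> z i j = Z (i - 1) (j + 1)) \<and>
      (\<not> jl P i j \<and> \<not> jr P i j \<and> circ P i j \<longrightarrow> z i j = real_of_int (a i j)) \<and>
      (\<not> jl P i j \<and> \<not> jr P i j \<and> \<not> circ P i j \<longrightarrow>
         (if a i j - a (i - 1) j \<ge> 2 then real_of_int (a i j) - 1 < z i j else Z (i - 1) j < z i j) \<and>
         (if a (i - 1) (j + 1) = a i j then z i j < Z (i - 1) (j + 1) else z i j < real_of_int (a i j))))"

lemma cell_hat_iff:
  "z \<in> cell_hat n lam P \<longleftrightarrow> z \<in> pts n \<and> (\<forall>i j. coord_dom n i j \<longrightarrow> cell_hat_conds n lam P z i j)"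
  unfolding cell_hat_def cell_hat_conds_def by blast

lemma cell_hat_condsI:
  assumes "jl P i j \<Longrightarrow> z i j = ext n lam z (i - 1) j"
    and "jr P i j \<Longrightarrow> z i j = ext n lam z (i - 1) (j + 1)"
    and "\<not> jl P i j \<Longrightarrow> \<not> jr P i j \<Longrightarrow> circ P i j \<Longrightarrow> z i j = of_int (ent P i j)"
    and "\<not> jl P i j \<Longrightarrow> \<not> jr P i j \<Longrightarrow> \<not> circ P i j \<Longrightarrow>
      (if 2 \<le> ent P i j - ent P (i - 1) j then of_int (ent P i j) - 1 < z i j else ext n lam z (i - 1) j < z i j) \<and>
      (if ent P (i - 1) (j + 1) = ent P i j then z i j < ext n lam z (i - 1) (j + 1) else z i j < of_int (ent P i j))"
  shows "cell_hat_conds n lam P z i j"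
  using assms unfolding cell_hat_conds_def Let_def by blast

lemma cell_hat_subset_pts: "cell_hat n lam P \<subseteq> pts n"
  by (auto simp: cell_hat_iff)

lemma aff_span_cell_hat_joined_left:
  "z \<in> aff_span (cell_hat n lam P) \<Longrightarrow> coord_dom n i j \<Longrightarrow> jl P i j \<Longrightarrow> z i j = ext n lam z (i - 1) j"
  by (erule aff_span_ext_eq) (auto simp: cell_hat_iff cell_hat_conds_def Let_def)

lemma aff_span_cell_hat_joined_right:
  "z \<in> aff_span (cell_hat n lam P) \<Longrightarrow> coord_dom n i j \<Longrightarrow> jr P i j \<Longrightarrow> z i j = ext n lam z (i - 1) (j + 1)"
  by (erule aff_span_ext_eq) (auto simp: cell_hat_iff cell_hat_conds_def Let_def)

lemma eventually_in_GZ: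
  assumes "L \<subseteq> pts n"
    and "\<And>i j. coord_dom n i j \<Longrightarrow> \<forall>\<^sub>F z in F. z \<in> L \<longrightarrow>
      ext n lam z (i - 1) j \<le> z i j \<and> z i j \<le> ext n lam z (i - 1) (j + 1)"
  shows "\<forall>\<^sub>F z in F. z \<in> L \<longrightarrow> z \<in> GZ n lam"
proof -
  have "\<forall>\<^sub>F z in F. \<forall>(i, j)\<in>{(i, j). coord_dom n i j}. z \<in> L \<longrightarrow>
      ext n lam z (i - 1) j \<le> z i j \<and> z i j \<le> ext n lam z (i - 1) (j + 1)"
    using assms(2) by (intro eventually_ball_finite finite_coord_dom) auto
  then show ?thesis
  proof (rule eventually_mono, intro impI)
    fix z assume "\<forall>(i, j)\<in>{(i, j). coord_dom n i j}. z \<in> L \<longrightarrow>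
        ext n lam z (i - 1) j \<le> z i j \<and> z i j \<le> ext n lam z (i - 1) (j + 1)"
      and "z \<in> L"
    with assms(1) show "z \<in> GZ n lam" unfolding GZ_def by blast
  qed
qed

section \<open>The pattern of a point\<close>

fun canon_ent :: "nat \<Rightarrow> (nat \<Rightarrow> int) \<Rightarrow> (nat \<Rightarrow> nat \<Rightarrow> real) \<Rightarrow> nat \<Rightarrow> nat \<Rightarrow> int" where
  "canon_ent n lam y 0 j = (if 1 \<le> j \<and> j \<le> n then lam (n + 1 - j) else 0)"
| "canon_ent n lam y (Suc i) j =
     (if pat_dom n (Suc i) j
      then next_entry (ext n lam y i j) (ext n lam y i (j + 1)) (y (Suc i) j)
             (canon_ent n lam y i j) (canon_ent n lam y i (j + 1))
      else 0)"

definition canon_pattern :: "nat \<Rightarrow> (nat \<Rightarrow> int) \<Rightarrow> (nat \<Rightarrow> nat \<Rightarrow> real) \<Rightarrow> epat" where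
  "canon_pattern n lam y =
     \<lparr>ent = canon_ent n lam y,
      circ = (\<lambda>i j. pat_dom n i j \<and>
        (i = 0 \<or> y i j = ext n lam y (i - 1) j \<or> y i j = ext n lam y (i - 1) (j + 1) \<or>
         (y i j \<in> \<int> \<and> of_int (canon_ent n lam y (i - 1) j) < y i j))),
      jl = (\<lambda>i j. coord_dom n i j \<and> y i j = ext n lam y (i - 1) j),
      jr = (\<lambda>i j. coord_dom n i j \<and> y i j = ext n lam y (i - 1) (j + 1))\<rparr>"

locale gz_point =
  fixes n :: nat and lam :: "nat \<Rightarrow> int" and y :: "nat \<Rightarrow> nat \<Rightarrow> real"
  assumes partition: "\<forall>i. 1 \<le> i \<and> i < n \<longrightarrow> lam (i + 1) \<le> lam i"
    and in_GZ: "y \<in> GZ n lam"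
begin

abbreviation "Y \<equiv> ext n lam y"
abbreviation "A \<equiv> canon_ent n lam y"
abbreviation "canon \<equiv> canon_pattern n lam y"

lemma in_pts: "y \<in> pts n"
  using in_GZ by (simp add: GZ_def)

lemma ent_canon [simp]: "ent canon = A"
  by (simp add: canon_pattern_def)

lemma interlacing: "coord_dom n (Suc i) j \<Longrightarrow> Y i j \<le> y (Suc i) j \<and> y (Suc i) j \<le> Y i (j + 1)"
  using in_GZ unfolding GZ_def by fastforce

lemma tie_both_if_neighbours_eq:
  "coord_dom n (Suc i) j \<Longrightarrow> Y i j = Y i (j + 1) \<Longrightarrow> y (Suc i) j = Y i j \<and> y (Suc i) j = Y i (j + 1)"
  using interlacing by fastforce

lemma canon_ent_Suc:
  "coord_dom n (Suc i) j \<Longrightarrow> A (Suc i) j = next_entry (Y i j) (Y i (j + 1)) (y (Suc i) j) (A i j) (A i (j + 1))"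
  by (simp add: coord_dom_iff_pat_dom)

lemma canon_ent_rows:
  "(\<forall>j. pat_dom n i j \<longrightarrow> Y i j \<le> of_int (A i j)) \<and> (\<forall>j. 1 \<le> j \<and> pat_dom n i (j + 1) \<longrightarrow> A i j \<le> A i (j + 1))"
proof (induction i)
  case 0
  have "lam (n - j + 1) \<le> lam (n - j)" if "1 \<le> j" "j + 1 \<le> n" for j
    using partition that by auto
  then show ?case by (auto simp: pat_dom_def Suc_diff_le)
next
  case (Suc i)
  have step: "A i j \<le> A (Suc i) j \<and> A (Suc i) j \<le> A i (j + 1) \<and> y (Suc i) j \<le> of_int (A (Suc i) j)"
    if "coord_dom n (Suc i) j" for j
    using next_entry_bounds interlacing[OF that] Suc.IH that canon_ent_Suc[OF that]
    by (auto simp: coord_dom_def pat_dom_def)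
  show ?case
  proof (intro conjI allI impI)
    fix j assume "pat_dom n (Suc i) j"
    then show "Y (Suc i) j \<le> of_int (A (Suc i) j)" using step by (simp add: coord_dom_iff_pat_dom)
  next
    fix j assume "1 \<le> j \<and> pat_dom n (Suc i) (j + 1)"
    then have "coord_dom n (Suc i) j" "coord_dom n (Suc i) (j + 1)" by (auto simp: coord_dom_def pat_dom_def)
    then show "A (Suc i) j \<le> A (Suc i) (j + 1)" using step[of j] step[of "j + 1"] by linarith
  qed
qed

lemma ext_le_canon_ent: "pat_dom n i j \<Longrightarrow> Y i j \<le> of_int (A i j)"
  using canon_ent_rows by blast

lemma canon_ent_mono: "1 \<le> j \<Longrightarrow> pat_dom n i (j + 1) \<Longrightarrow> A i j \<le> A i (j + 1)"
  using canon_ent_rows by blast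

lemma canon_ent_interlacing: "coord_dom n (Suc i) j \<Longrightarrow> A i j \<le> A (Suc i) j \<and> A (Suc i) j \<le> A i (j + 1)"
  using next_entry_bounds interlacing canon_ent_Suc ext_le_canon_ent canon_ent_mono
  by (auto simp: coord_dom_def pat_dom_def)

lemma canon_ent_eq_if_ext_eq:
  "1 \<le> j \<Longrightarrow> pat_dom n i (j + 1) \<Longrightarrow> Y i j = Y i (j + 1) \<Longrightarrow> A i j = A i (j + 1)"
proof (induction i arbitrary: j)
  case 0
  then show ?case by (simp add: pat_dom_def)
next
  case (Suc i)
  have c: "coord_dom n (Suc i) j" "coord_dom n (Suc i) (j + 1)"
    using Suc.prems by (auto simp: coord_dom_def pat_dom_def)
  let ?v = "y (Suc i) j"
  have v: "?v = Y i (j + 1)" "y (Suc i) (j + 1) = ?v"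
    using interlacing[OF c(1)] interlacing[OF c(2)] Suc.prems(3) by auto
  have "A (Suc i) j = A i (j + 1)"
  proof (cases "?v = Y i j")
    case True
    then have "A i j = A i (j + 1)" using Suc.IH Suc.prems v by (simp add: pat_dom_def)
    then show ?thesis using canon_ent_Suc[OF c(1)] True by (simp add: next_entry_def)
  next
    case False
    then show ?thesis using canon_ent_Suc[OF c(1)] v by (simp add: next_entry_def)
  qed
  moreover have "A (Suc i) (j + 1) = A i (j + 1)"
    using canon_ent_Suc[OF c(2)] v by (simp add: next_entry_def)
  ultimately show ?case by simp
qed

lemma canon_ent_tie_left: "coord_dom n (Suc i) j \<Longrightarrow> y (Suc i) j = Y i j \<Longrightarrow> A (Suc i) j = A i j"
  using canon_ent_Suc by (simp add: next_entry_def)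

lemma canon_ent_tie_right:
  assumes c: "coord_dom n (Suc i) j" and tie: "y (Suc i) j = Y i (j + 1)"
  shows "A (Suc i) j = A i (j + 1)"
proof (cases "y (Suc i) j = Y i j")
  case True
  then have "A i j = A i (j + 1)"
    using c tie by (intro canon_ent_eq_if_ext_eq) (auto simp: coord_dom_def pat_dom_def)
  then show ?thesis using canon_ent_tie_left[OF c True] by simp
qed (use canon_ent_Suc[OF c] tie in \<open>simp add: next_entry_def\<close>)

lemma canon_ent_free_circ:
  assumes "coord_dom n (Suc i) j" "y (Suc i) j \<noteq> Y i j" "y (Suc i) j \<noteq> Y i (j + 1)"
    and "y (Suc i) j \<in> \<int>" "of_int (A i j) < y (Suc i) j"
  shows "of_int (A (Suc i) j) = y (Suc i) j"
  using assms canon_ent_Suc[OF assms(1)] next_entry_integer by (simp add: of_int_floor_eq_iff_Ints)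

lemma canon_left_edge_if_entry_eq:
  assumes c: "coord_dom n (Suc k) j" and lt: "A k j < A k (j + 1)" and eq: "A (Suc k) j = A k j"
  shows "circ canon (Suc k) j \<and> jl canon (Suc k) j"
proof -
  have "y (Suc k) j = Y k j"
  proof (rule ccontr)
    assume not_left: "y (Suc k) j \<noteq> Y k j"
    show False
    proof (cases "y (Suc k) j = Y k (j + 1)")
      case True
      then show False using canon_ent_tie_right[OF c] lt eq by simp
    next
      case False
      then show False using canon_ent_Suc[OF c] next_entry_neq_left not_left lt eq by simp
    qed
  qed
  then show ?thesis using c by (simp add: canon_pattern_def coord_dom_iff_pat_dom)
qed

lemma path_connected_ext_eq:
  assumes "connected_by_path canon p q"
  shows "Y (fst p) (snd p) = Y (fst q) (snd q)"
  using assms unfolding connected_by_path_def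
proof (induction rule: rtrancl_induct)
  case (step q r)
  then show ?case by (auto simp: edge_rel_def canon_pattern_def)
qed simp

lemma all_rows_Suc:
  assumes "\<And>k j. coord_dom n (Suc k) j \<Longrightarrow> R (Suc k) j \<Longrightarrow> S (Suc k) j"
  shows "\<forall>i j. 1 \<le> i \<and> pat_dom n i j \<and> R i j \<longrightarrow> S i j"
proof (intro allI impI)
  fix i j assume h: "1 \<le> i \<and> pat_dom n i j \<and> R i j"
  then obtain k where "i = Suc k" by (cases i) auto
  with h assms show "S i j" by (simp add: coord_dom_iff_pat_dom)
qed

lemma canon_GZ_pattern: "GZ_pattern n lam A"
  unfolding GZ_pattern_def
proof (intro conjI)
  show "\<forall>i j. \<not> pat_dom n i j \<longrightarrow> A i j = 0"
    by (intro allI, case_tac i) (auto simp: pat_dom_def)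
  show "\<forall>i j. 1 \<le> i \<and> pat_dom n i j \<longrightarrow> A (i - 1) j \<le> A i j \<and> A i j \<le> A (i - 1) (j + 1)"
  proof (intro allI impI)
    fix i j assume h: "1 \<le> i \<and> pat_dom n i j"
    then obtain k where "i = Suc k" by (cases i) auto
    with h show "A (i - 1) j \<le> A i j \<and> A i j \<le> A (i - 1) (j + 1)"
      using canon_ent_interlacing by (simp add: coord_dom_iff_pat_dom)
  qed
qed simp

lemma canon_double_edges:
  assumes "1 \<le> i" "pat_dom n i (j + 1)" "1 \<le> j"
  shows "(jr canon i j \<and> jl canon i (j + 1)) \<longleftrightarrow> (jl canon (i + 1) j \<and> jr canon (i + 1) j)"
proof -
  have c: "coord_dom n i j" "coord_dom n i (j + 1)" "coord_dom n (i + 1) j"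
    using assms by (auto simp: pat_dom_def coord_dom_def)
  obtain k where i: "i = Suc k" using assms(1) by (cases i) auto
  have "Y i j = y i j" "Y i (j + 1) = y i (j + 1)" by (simp_all add: i)
  then show ?thesis
    using interlacing[of k j] interlacing[of k "j + 1"] interlacing[of i j] c
    by (auto simp: canon_pattern_def i)
qed

lemma canon_edge_left: "jl canon i j \<Longrightarrow> A i j = A (i - 1) j \<and> circ canon i j"
proof -
  assume "jl canon i j"
  then obtain k where i: "i = Suc k" and c: "coord_dom n (Suc k) j" and tie: "y (Suc k) j = Y k j"
    by (cases i) (auto simp: canon_pattern_def coord_dom_def)
  then show ?thesis using canon_ent_tie_left[OF c tie] by (simp add: canon_pattern_def coord_dom_iff_pat_dom)
qed

lemma canon_edge_right: "jr canon i j \<Longrightarrow> A i j = A (i - 1) (j + 1) \<and> circ canon i j"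
proof -
  assume "jr canon i j"
  then obtain k where i: "i = Suc k" and c: "coord_dom n (Suc k) j" and tie: "y (Suc k) j = Y k (j + 1)"
    by (cases i) (auto simp: canon_pattern_def coord_dom_def)
  then show ?thesis using canon_ent_tie_right[OF c tie] by (simp add: canon_pattern_def coord_dom_iff_pat_dom)
qed

lemma canon_right_edge_if_circ:
  assumes c: "coord_dom n (Suc k) j" and lt: "A k j < A k (j + 1)" and eq: "A (Suc k) j = A k (j + 1)"
    and circ: "circ canon (Suc k) j"
  shows "jr canon (Suc k) j"
proof -
  have "y (Suc k) j = Y k (j + 1)"
  proof (rule ccontr)
    assume not_right: "y (Suc k) j \<noteq> Y k (j + 1)"
    have not_left: "y (Suc k) j \<noteq> Y k j" using canon_ent_tie_left[OF c] lt eq by auto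
    with circ not_right have int: "y (Suc k) j \<in> \<int>" "of_int (A k j) < y (Suc k) j"
      by (auto simp: canon_pattern_def)
    have "y (Suc k) j < Y k (j + 1)" using interlacing[OF c] not_right by simp
    also have "\<dots> \<le> of_int (A k (j + 1))"
      using c by (intro ext_le_canon_ent) (simp add: coord_dom_def pat_dom_def)
    finally show False using canon_ent_free_circ[OF c not_left not_right int] eq by simp
  qed
  then show ?thesis using c by (simp add: canon_pattern_def)
qed

lemma canon_circ_joined:
  assumes c: "coord_dom n (Suc k) j" and eq: "A (Suc k) j = A k j" and circ: "circ canon (Suc k) j"
  shows "jl canon (Suc k) j \<or> jr canon (Suc k) j"
proof (rule ccontr)
  assume "\<not> ?thesis"
  then have no_tie: "y (Suc k) j \<noteq> Y k j" "y (Suc k) j \<noteq> Y k (j + 1)"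
    using c by (auto simp: canon_pattern_def)
  with circ have int: "y (Suc k) j \<in> \<int>" "of_int (A k j) < y (Suc k) j"
    by (auto simp: canon_pattern_def)
  then show False using canon_ent_free_circ[OF c no_tie int] eq by simp
qed

lemma canon_edges_if_path:
  assumes c: "coord_dom n (Suc k) j" and path: "connected_by_path canon (k, j) (k, j + 1)"
  shows "circ canon (Suc k) j \<and> jl canon (Suc k) j \<and> jr canon (Suc k) j"
proof -
  have "Y k j = Y k (j + 1)" using path_connected_ext_eq[OF path] by simp
  then show ?thesis
    using tie_both_if_neighbours_eq[OF c] c by (simp add: canon_pattern_def coord_dom_iff_pat_dom)
qed

lemma enhanced_canon_pattern: "enhanced_GZ n lam canon"
  unfolding enhanced_GZ_def Let_def
  apply (intro conjI)
  subgoal using canon_GZ_pattern by (simp add: canon_pattern_def)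
  subgoal by (simp add: canon_pattern_def)
  subgoal by (auto simp: canon_pattern_def coord_dom_iff_pat_dom)
  subgoal by (simp add: canon_pattern_def)
  subgoal using canon_edge_left by (simp add: canon_pattern_def)
  subgoal using canon_edge_right by (simp add: canon_pattern_def)
  subgoal using canon_double_edges by blast
  subgoal using tie_both_if_neighbours_eq[of 0] by (auto simp: canon_pattern_def coord_dom_def pat_dom_def)
  subgoal by (rule all_rows_Suc) (simp add: canon_left_edge_if_entry_eq)
  subgoal by (rule all_rows_Suc) (simp add: canon_right_edge_if_circ)
  subgoal by (rule all_rows_Suc) (simp add: canon_edges_if_path)
  subgoal by (rule all_rows_Suc) (simp add: canon_circ_joined)
  done

lemma canon_in_cell_hat: "y \<in> cell_hat n lam canon"
  unfolding cell_hat_iff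
proof (intro conjI allI impI in_pts)
  fix i j assume "coord_dom n i j"
  then obtain k where i: "i = Suc k" and c: "coord_dom n (Suc k) j" by (cases i) (auto simp: coord_dom_def)
  let ?v = "y (Suc k) j"
  have free_open: "(if 2 \<le> A (Suc k) j - A k j then of_int (A (Suc k) j) - 1 < ?v else Y k j < ?v) \<and>
      (if A k (j + 1) = A (Suc k) j then ?v < Y k (j + 1) else ?v < of_int (A (Suc k) j))"
    if "?v \<noteq> Y k j" "?v \<noteq> Y k (j + 1)" "\<not> (?v \<in> \<int> \<and> of_int (A k j) < ?v)"
  proof -
    have "Y k j < ?v" "?v < Y k (j + 1)" using interlacing[OF c] that(1,2) by auto
    then show ?thesis
      unfolding canon_ent_Suc[OF c]
      using next_entry_open[of "Y k j" ?v "Y k (j + 1)" "A k j" "A k (j + 1)"] that(3) by simp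
  qed
  show "cell_hat_conds n lam canon y i j"
  proof (rule cell_hat_condsI)
    assume "\<not> jl canon i j" "\<not> jr canon i j"
    then have no_tie: "?v \<noteq> Y k j" "?v \<noteq> Y k (j + 1)" using c by (simp_all add: canon_pattern_def i)
    {
      assume "circ canon i j"
      then show "y i j = of_int (ent canon i j)"
        using canon_ent_free_circ[OF c no_tie] no_tie by (simp add: canon_pattern_def i)
    next
      assume "\<not> circ canon i j"
      then have "\<not> (?v \<in> \<int> \<and> of_int (A k j) < ?v)"
        using c no_tie by (simp add: canon_pattern_def i coord_dom_iff_pat_dom)
      then show "(if 2 \<le> ent canon i j - ent canon (i - 1) j then of_int (ent canon i j) - 1 < y i j
          else Y (i - 1) j < y i j) \<and>
        (if ent canon (i - 1) (j + 1) = ent canon i j then y i j < Y (i - 1) (j + 1)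
          else y i j < of_int (ent canon i j))"
        unfolding i diff_Suc_1 ent_canon by (rule free_open[OF no_tie])
    }
  qed (simp_all add: canon_pattern_def)
qed

lemma canon_span_GZ_bounds:
  assumes c: "coord_dom n i j"
  shows "\<forall>\<^sub>F z in near y. z \<in> aff_span (cell_hat n lam canon) \<longrightarrow>
    ext n lam z (i - 1) j \<le> z i j \<and> z i j \<le> ext n lam z (i - 1) (j + 1)"
proof -
  let ?L = "aff_span (cell_hat n lam canon)"
  have lower: "\<forall>\<^sub>F z in near y. z \<in> ?L \<longrightarrow> ext n lam z (i - 1) j \<le> z i j"
  proof (cases "y i j = Y (i - 1) j")
    case True
    then have "jl canon i j" using c by (simp add: canon_pattern_def)
    then have "z \<in> ?L \<longrightarrow> ext n lam z (i - 1) j \<le> z i j" for z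
      by (auto dest: aff_span_cell_hat_joined_left[OF _ c])
    then show ?thesis by (intro always_eventually allI)
  next
    case False
    then have "Y (i - 1) j < Y i j" using interlacing[of "i - 1" j] c by (simp add: coord_dom_def)
    then have "\<forall>\<^sub>F z in near y. ext n lam z (i - 1) j < ext n lam z i j" by (rule eventually_near_ext_less)
    then show ?thesis by (rule eventually_mono) (use c in \<open>simp add: coord_dom_def\<close>)
  qed
  have upper: "\<forall>\<^sub>F z in near y. z \<in> ?L \<longrightarrow> z i j \<le> ext n lam z (i - 1) (j + 1)"
  proof (cases "y i j = Y (i - 1) (j + 1)")
    case True
    then have "jr canon i j" using c by (simp add: canon_pattern_def)
    then have "z \<in> ?L \<longrightarrow> z i j \<le> ext n lam z (i - 1) (j + 1)" for z
      by (auto dest: aff_span_cell_hat_joined_right[OF _ c])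
    then show ?thesis by (intro always_eventually allI)
  next
    case False
    then have "Y i j < Y (i - 1) (j + 1)" using interlacing[of "i - 1" j] c by (simp add: coord_dom_def)
    then have "\<forall>\<^sub>F z in near y. ext n lam z i j < ext n lam z (i - 1) (j + 1)" by (rule eventually_near_ext_less)
    then show ?thesis by (rule eventually_mono) (use c in \<open>simp add: coord_dom_def\<close>)
  qed
  show ?thesis using eventually_conj[OF lower upper] by (rule eventually_mono) simp
qed

lemma canon_in_cell: "y \<in> cell n lam canon"
proof -
  let ?L = "aff_span (cell_hat n lam canon)"
  have "\<forall>\<^sub>F z in near y. z \<in> ?L \<longrightarrow> z \<in> GZ n lam"
    using aff_span_pts[OF cell_hat_subset_pts] canon_span_GZ_bounds by (rule eventually_in_GZ)
  moreover have "y \<in> ?L" using canon_in_cell_hat aff_span_superset by blast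
  ultimately have "y \<in> rel_int_in ?L (GZ n lam \<inter> ?L)"
    unfolding rel_int_in_iff using in_GZ by simp
  then show ?thesis unfolding cell_def Let_def using canon_in_cell_hat by simp
qed

end

section \<open>Uniqueness\<close>

locale gz_cell = gz_point +
  fixes P :: epat
  assumes enhanced: "enhanced_GZ n lam P"
    and in_cell: "y \<in> cell n lam P"
begin

abbreviation "a \<equiv> ent P"

lemma ent_GZ_pattern: "GZ_pattern n lam a"
  using enhanced unfolding enhanced_GZ_def Let_def by (elim conjE)

lemma ent_outside: "\<not> pat_dom n i j \<Longrightarrow> a i j = 0"
  using ent_GZ_pattern by (simp add: GZ_pattern_def)

lemma ent_row0: "1 \<le> j \<Longrightarrow> j \<le> n \<Longrightarrow> a 0 j = lam (n + 1 - j)"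
  using ent_GZ_pattern by (simp add: GZ_pattern_def)

lemma ext_0_eq_ent: "1 \<le> j \<Longrightarrow> j \<le> n \<Longrightarrow> Y 0 j = of_int (a 0 j)"
  by (simp add: ent_row0)

lemma ent_interlacing: "coord_dom n (Suc i) j \<Longrightarrow> a i j \<le> a (Suc i) j \<and> a (Suc i) j \<le> a i (j + 1)"
  using ent_GZ_pattern by (fastforce simp: GZ_pattern_def coord_dom_iff_pat_dom)

lemma circ_outside: "\<not> pat_dom n i j \<Longrightarrow> \<not> circ P i j"
  using enhanced unfolding enhanced_GZ_def Let_def by (elim conjE) blast

lemma edges_outside: "\<not> coord_dom n i j \<Longrightarrow> \<not> jl P i j \<and> \<not> jr P i j"
  using enhanced unfolding enhanced_GZ_def Let_def coord_dom_iff_pat_dom by (elim conjE) blast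

lemma circ_row0: "pat_dom n 0 j \<Longrightarrow> circ P 0 j"
  using enhanced unfolding enhanced_GZ_def Let_def by (elim conjE) blast

lemma joined_left_ent: "jl P i j \<Longrightarrow> a i j = a (i - 1) j \<and> circ P i j"
  using enhanced unfolding enhanced_GZ_def Let_def by (elim conjE) blast

lemma joined_right_ent: "jr P i j \<Longrightarrow> a i j = a (i - 1) (j + 1) \<and> circ P i j"
  using enhanced unfolding enhanced_GZ_def Let_def by (elim conjE) blast

lemma double_edges_down:
  assumes "1 \<le> i" "pat_dom n i (j + 1)" "1 \<le> j" "jr P i j" "jl P i (j + 1)"
  shows "jl P (i + 1) j \<and> jr P (i + 1) j"
proof -
  from enhanced have "\<forall>i j. 1 \<le> i \<and> pat_dom n i (j + 1) \<and> 1 \<le> j \<longrightarrow>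
      ((jr P i j \<and> jl P i (j + 1)) \<longleftrightarrow> (jl P (i + 1) j \<and> jr P (i + 1) j))"
    unfolding enhanced_GZ_def Let_def by (elim conjE)
  with assms show ?thesis by blast
qed

lemma top_equal_joined:
  assumes "1 \<le> j" "j + 1 \<le> n" "a 0 j = a 0 (j + 1)"
  shows "jl P 1 j \<and> jr P 1 j"
proof -
  from enhanced have "\<forall>j. 1 \<le> j \<and> j + 1 \<le> n \<and> a 0 j = a 0 (j + 1) \<longrightarrow>
      circ P 1 j \<and> jl P 1 j \<and> jr P 1 j"
    unfolding enhanced_GZ_def Let_def by (elim conjE)
  with assms show ?thesis by blast
qed

lemma left_equal_joined:
  assumes "coord_dom n i j" "a (i - 1) j < a (i - 1) (j + 1)" "a i j = a (i - 1) j"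
  shows "jl P i j"
proof -
  from enhanced have "\<forall>i j. 1 \<le> i \<and> pat_dom n i j \<and> a (i - 1) j < a (i - 1) (j + 1) \<and>
      a i j = a (i - 1) j \<longrightarrow> circ P i j \<and> jl P i j"
    unfolding enhanced_GZ_def Let_def by (elim conjE)
  with assms show ?thesis by (auto simp: coord_dom_iff_pat_dom)
qed

lemma right_equal_circ_joined:
  assumes "coord_dom n i j" "a (i - 1) j < a (i - 1) (j + 1)" "a i j = a (i - 1) (j + 1)" "circ P i j"
  shows "jr P i j"
proof -
  from enhanced have "\<forall>i j. 1 \<le> i \<and> pat_dom n i j \<and> a (i - 1) j < a (i - 1) (j + 1) \<and>
      a i j = a (i - 1) (j + 1) \<and> circ P i j \<longrightarrow> jr P i j"
    unfolding enhanced_GZ_def Let_def by (elim conjE)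
  with assms show ?thesis by (auto simp: coord_dom_iff_pat_dom)
qed

lemma flat_circ_joined:
  assumes "coord_dom n i j" "a (i - 1) j = a (i - 1) (j + 1)" "a i j = a (i - 1) j" "circ P i j"
  shows "jl P i j \<or> jr P i j"
proof -
  from enhanced have "\<forall>i j. 1 \<le> i \<and> pat_dom n i j \<and> a (i - 1) j = a (i - 1) (j + 1) \<and>
      a i j = a (i - 1) j \<and> circ P i j \<longrightarrow> jl P i j \<or> jr P i j"
    unfolding enhanced_GZ_def Let_def by (elim conjE)
  with assms show ?thesis by (auto simp: coord_dom_iff_pat_dom)
qed

lemma in_cell_hat: "y \<in> cell_hat n lam P"
  using in_cell by (simp add: cell_def Let_def)

lemma cell_conds: "coord_dom n i j \<Longrightarrow> cell_hat_conds n lam P y i j"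
  using in_cell_hat by (simp add: cell_hat_iff)

lemma cell_joined_left: "coord_dom n i j \<Longrightarrow> jl P i j \<Longrightarrow> y i j = Y (i - 1) j"
  using cell_conds[of i j] by (simp add: cell_hat_conds_def Let_def)

lemma cell_joined_right: "coord_dom n i j \<Longrightarrow> jr P i j \<Longrightarrow> y i j = Y (i - 1) (j + 1)"
  using cell_conds[of i j] by (simp add: cell_hat_conds_def Let_def)

lemma cell_free_circ:
  "coord_dom n i j \<Longrightarrow> \<not> jl P i j \<Longrightarrow> \<not> jr P i j \<Longrightarrow> circ P i j \<Longrightarrow> y i j = of_int (a i j)"
  using cell_conds[of i j] by (simp add: cell_hat_conds_def Let_def)

lemma cell_open:
  "coord_dom n i j \<Longrightarrow> \<not> jl P i j \<Longrightarrow> \<not> jr P i j \<Longrightarrow> \<not> circ P i j \<Longrightarrow>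
    (if 2 \<le> a i j - a (i - 1) j then of_int (a i j) - 1 < y i j else Y (i - 1) j < y i j) \<and>
    (if a (i - 1) (j + 1) = a i j then y i j < Y (i - 1) (j + 1) else y i j < of_int (a i j))"
  using cell_conds[of i j] by (simp add: cell_hat_conds_def Let_def)

lemma relint_GZ: "\<forall>\<^sub>F z in near y. z \<in> aff_span (cell_hat n lam P) \<longrightarrow> z \<in> GZ n lam"
  using in_cell by (auto simp: cell_def Let_def rel_int_in_iff elim: eventually_mono)

lemma ext_le_ent: "pat_dom n i j \<Longrightarrow> Y i j \<le> of_int (a i j)"
proof (induction i arbitrary: j)
  case 0
  then show ?case by (simp add: pat_dom_def ent_row0)
next
  case (Suc k)
  then have c: "coord_dom n (Suc k) j" by (simp add: coord_dom_iff_pat_dom)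
  then have IH: "Y k j \<le> of_int (a k j)" "Y k (j + 1) \<le> of_int (a k (j + 1))"
    using Suc.IH by (auto simp: coord_dom_def pat_dom_def)
  consider "jl P (Suc k) j" | "jr P (Suc k) j" | "\<not> jl P (Suc k) j" "\<not> jr P (Suc k) j" by blast
  then show ?case
  proof cases
    case 1
    then show ?thesis using cell_joined_left[OF c] joined_left_ent IH by simp
  next
    case 2
    then show ?thesis using cell_joined_right[OF c] joined_right_ent IH by simp
  next
    case 3
    then show ?thesis
      using cell_free_circ[OF c] cell_open[OF c] IH by (cases "circ P (Suc k) j") (auto split: if_splits)
  qed
qed

text \<open>Shifting all coordinates of value \<open>v\<close> and entry \<open>c \<noteq> v\<close> by the same small \<open>t\<close> keeps
  \<open>y\<close> inside \<open>\<widehat>C_P\<close>, hence inside \<open>GZ(\<lambda>)\<close>; this is what forces ties of \<open>y\<close> to join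
  equal entries.\<close>

definition level :: "real \<Rightarrow> int \<Rightarrow> nat \<Rightarrow> nat \<Rightarrow> bool" where
  "level v c i j \<longleftrightarrow> coord_dom n i j \<and> y i j = v \<and> a i j = c"

definition shift :: "real \<Rightarrow> int \<Rightarrow> real \<Rightarrow> nat \<Rightarrow> nat \<Rightarrow> real" where
  "shift v c t i j = y i j + t * of_bool (level v c i j)"

lemma ext_shift: "ext n lam (shift v c t) p q = Y p q + t * of_bool (level v c p q)"
  by (simp add: ext_def shift_def level_def coord_dom_def)

lemma level_eq_if_joined:
  assumes "of_int c \<noteq> v" "coord_dom n i j" "j' \<in> {j, j + 1}" "y i j = Y (i - 1) j'" "a i j = a (i - 1) j'"
  shows "level v c i j = level v c (i - 1) j'"
proof (cases "i = 1")
  case True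
  have "Y 0 j' = of_int (a 0 j')" using assms(2,3) by (intro ext_0_eq_ent) (auto simp: coord_dom_def)
  then show ?thesis using True assms by (auto simp: level_def coord_dom_def)
next
  case False
  then have "coord_dom n (i - 1) j'" "Y (i - 1) j' = y (i - 1) j'"
    using assms(2,3) by (auto simp: coord_dom_def)
  then show ?thesis using assms by (auto simp: level_def)
qed

lemma eventually_shift_open:
  assumes cd: "coord_dom n i j" and free: "\<not> jl P i j" "\<not> jr P i j" "\<not> circ P i j"
  shows "\<forall>\<^sub>F t in nhds 0.
    (if 2 \<le> a i j - a (i - 1) j then of_int (a i j) - 1 < shift v c t i j
     else ext n lam (shift v c t) (i - 1) j < shift v c t i j) \<and>
    (if a (i - 1) (j + 1) = a i j then shift v c t i j < ext n lam (shift v c t) (i - 1) (j + 1)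
     else shift v c t i j < of_int (a i j))"
proof -
  let ?d = "\<lambda>p q. of_bool (level v c p q) :: real"
  note cell = cell_open[OF cd free]
  have lower: "\<forall>\<^sub>F t in nhds 0.
      (if 2 \<le> a i j - a (i - 1) j then of_int (a i j) - 1 < shift v c t i j
       else ext n lam (shift v c t) (i - 1) j < shift v c t i j)"
  proof (cases "2 \<le> a i j - a (i - 1) j")
    case True
    then have "of_int (a i j) - 1 < y i j" using cell by simp
    from eventually_perturbed_less[OF this, of 0 "?d i j"] show ?thesis
      using True by (simp add: shift_def)
  next
    case False
    then have "Y (i - 1) j < y i j" using cell by simp
    from eventually_perturbed_less[OF this, of "?d (i - 1) j" "?d i j"] show ?thesis
      using False by (simp add: shift_def ext_shift)
  qed
  have upper: "\<forall>\<^sub>F t in nhds 0.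
      (if a (i - 1) (j + 1) = a i j then shift v c t i j < ext n lam (shift v c t) (i - 1) (j + 1)
       else shift v c t i j < of_int (a i j))"
  proof (cases "a (i - 1) (j + 1) = a i j")
    case True
    then have "y i j < Y (i - 1) (j + 1)" using cell by simp
    from eventually_perturbed_less[OF this, of "?d i j" "?d (i - 1) (j + 1)"] show ?thesis
      using True by (simp add: shift_def ext_shift)
  next
    case False
    then have "y i j < of_int (a i j)" using cell by simp
    from eventually_perturbed_less[OF this, of "?d i j" 0] show ?thesis
      using False by (simp add: shift_def)
  qed
  show ?thesis using eventually_conj[OF lower upper] .
qed

lemma shift_in_cell_hat:
  assumes "of_int c \<noteq> v"
  shows "\<forall>\<^sub>F t in nhds 0. shift v c t \<in> cell_hat n lam P"
proof -
  have conds: "\<forall>\<^sub>F t in nhds 0. cell_hat_conds n lam P (shift v c t) i j" if cd: "coord_dom n i j" for i j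
  proof -
    have "shift v c t i j = ext n lam (shift v c t) (i - 1) j" if "jl P i j" for t
      using level_eq_if_joined[OF assms cd, of j] cell_joined_left[OF cd that] joined_left_ent[OF that]
      by (simp add: shift_def ext_shift)
    moreover have "shift v c t i j = ext n lam (shift v c t) (i - 1) (j + 1)" if "jr P i j" for t
      using level_eq_if_joined[OF assms cd, of "j + 1"] cell_joined_right[OF cd that] joined_right_ent[OF that]
      by (simp add: shift_def ext_shift)
    moreover have "shift v c t i j = of_int (a i j)" if "\<not> jl P i j" "\<not> jr P i j" "circ P i j" for t
      using cell_free_circ[OF cd that] assms by (auto simp: shift_def level_def)
    moreover have "\<forall>\<^sub>F t in nhds 0. \<not> jl P i j \<and> \<not> jr P i j \<and> \<not> circ P i j \<longrightarrow>
      (if 2 \<le> a i j - a (i - 1) j then of_int (a i j) - 1 < shift v c t i j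
       else ext n lam (shift v c t) (i - 1) j < shift v c t i j) \<and>
      (if a (i - 1) (j + 1) = a i j then shift v c t i j < ext n lam (shift v c t) (i - 1) (j + 1)
       else shift v c t i j < of_int (a i j))"
      using eventually_shift_open[OF cd] by (cases "\<not> jl P i j \<and> \<not> jr P i j \<and> \<not> circ P i j") simp_all
    ultimately show ?thesis
      by (elim eventually_mono) (intro cell_hat_condsI; blast)
  qed
  have "\<forall>\<^sub>F t in nhds 0. \<forall>(i, j)\<in>{(i, j). coord_dom n i j}. cell_hat_conds n lam P (shift v c t) i j"
    using conds by (intro eventually_ball_finite finite_coord_dom) auto
  moreover have "shift v c t \<in> pts n" for t
    using in_pts by (simp add: pts_def shift_def level_def)
  ultimately show ?thesis by (elim eventually_mono) (auto simp: cell_hat_iff)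
qed

lemma shift_in_GZ:
  assumes "of_int c \<noteq> v"
  shows "\<forall>\<^sub>F t in nhds 0. shift v c t \<in> GZ n lam"
proof -
  have "\<forall>\<^sub>F t in nhds 0. shift v c t \<in> aff_span (cell_hat n lam P) \<longrightarrow> shift v c t \<in> GZ n lam"
    by (rule eventually_nhds_0_near[OF relint_GZ]) (simp add: shift_def abs_mult)
  moreover have "\<forall>\<^sub>F t in nhds 0. shift v c t \<in> aff_span (cell_hat n lam P)"
    using shift_in_cell_hat[OF assms] by (rule eventually_mono) (use aff_span_superset in blast)
  ultimately show ?thesis by (rule eventually_mp)
qed

lemma tie_level_eq:
  assumes "of_int c \<noteq> v" and c: "coord_dom n i j" and j': "j' \<in> {j, j + 1}" and tie: "y i j = Y (i - 1) j'"
  shows "level v c i j = level v c (i - 1) j'"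
proof -
  let ?d = "\<lambda>p q. of_bool (level v c p q) :: real"
  have GZ: "\<forall>\<^sub>F t in nhds 0. ext n lam (shift v c t) (i - 1) j \<le> shift v c t i j \<and>
      shift v c t i j \<le> ext n lam (shift v c t) (i - 1) (j + 1)"
    using shift_in_GZ[OF assms(1)] by (rule eventually_mono) (use c in \<open>simp add: GZ_def\<close>)
  have "?d i j = ?d (i - 1) j'"
  proof (cases "j' = j")
    case True
    have "\<forall>\<^sub>F t in nhds 0. t * ?d (i - 1) j \<le> t * ?d i j"
      using GZ by (rule eventually_mono) (use tie True in \<open>simp add: shift_def ext_shift\<close>)
    then show ?thesis using True eq_if_eventually_mult_le by metis
  next
    case False
    then have j': "j' = j + 1" using j' by simp
    have "\<forall>\<^sub>F t in nhds 0. t * ?d i j \<le> t * ?d (i - 1) (j + 1)"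
      using GZ by (rule eventually_mono) (use tie j' in \<open>simp add: shift_def ext_shift\<close>)
    then show ?thesis using j' eq_if_eventually_mult_le by metis
  qed
  then show ?thesis by (cases "level v c i j"; cases "level v c (i - 1) j'") simp_all
qed

lemma tie_entry_eq:
  assumes c: "coord_dom n i j" and j': "j' \<in> {j, j + 1}" and tie: "y i j = Y (i - 1) j'"
  shows "a i j = a (i - 1) j'"
proof (rule ccontr)
  assume ne: "a i j \<noteq> a (i - 1) j'"
  show False
  proof (cases "of_int (a i j) = y i j")
    case False
    have "level (y i j) (a i j) i j \<noteq> level (y i j) (a i j) (i - 1) j'"
      using c ne by (auto simp: level_def)
    then show False using tie_level_eq[OF False c j' tie] by simp
  next
    case True
    then have ne': "of_int (a (i - 1) j') \<noteq> y i j" using ne by auto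
    have "i \<noteq> 1"
    proof
      assume "i = 1"
      moreover have "Y 0 j' = of_int (a 0 j')" using c j' by (intro ext_0_eq_ent) (auto simp: coord_dom_def)
      ultimately show False using True tie ne by simp
    qed
    then have "level (y i j) (a (i - 1) j') (i - 1) j'"
      using c j' tie by (auto simp: level_def coord_dom_def)
    moreover have "\<not> level (y i j) (a (i - 1) j') i j" using ne by (simp add: level_def)
    ultimately show False using tie_level_eq[OF ne' c j' tie] by simp
  qed
qed

lemma tie_joined:
  assumes c: "coord_dom n i j" and j': "j' \<in> {j, j + 1}" and tie: "y i j = Y (i - 1) j'"
  shows "jl P i j \<or> jr P i j"
proof (rule ccontr)
  assume no_edge: "\<not> (jl P i j \<or> jr P i j)"
  have eq: "a i j = a (i - 1) j'" by (rule tie_entry_eq[OF c j' tie])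
  obtain k where i: "i = Suc k" using c by (cases i) (auto simp: coord_dom_def)
  have mono: "a (i - 1) j \<le> a (i - 1) (j + 1)" using ent_interlacing c by (fastforce simp: i)
  show False
  proof (cases "circ P i j")
    case True
    then show False
      using left_equal_joined[OF c] right_equal_circ_joined[OF c] flat_circ_joined[OF c] no_edge eq j' mono
      by (cases "a (i - 1) j < a (i - 1) (j + 1)") auto
  next
    case False
    then show False using cell_open[OF c _ _ False] no_edge eq tie j' by (auto split: if_splits)
  qed
qed

lemma tie_left_joined:
  assumes c: "coord_dom n (Suc i) j" and tie: "y (Suc i) j = Y i j"
    and double: "Y i j = Y i (j + 1) \<Longrightarrow> jl P (Suc i) j"
  shows "jl P (Suc i) j"
proof (cases "y (Suc i) j = Y i (j + 1)")
  case False
  then show ?thesis using tie_joined[OF c, of j] tie cell_joined_right[OF c] by auto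
qed (use tie double in simp)

lemma tie_right_joined:
  assumes c: "coord_dom n (Suc i) j" and tie: "y (Suc i) j = Y i (j + 1)"
    and double: "Y i j = Y i (j + 1) \<Longrightarrow> jr P (Suc i) j"
  shows "jr P (Suc i) j"
proof (cases "y (Suc i) j = Y i j")
  case False
  then show ?thesis using tie_joined[OF c, of "j + 1"] tie cell_joined_left[OF c] by auto
qed (use tie double in simp)

lemma neighbours_eq_joined:
  "coord_dom n (Suc i) j \<Longrightarrow> Y i j = Y i (j + 1) \<Longrightarrow> jl P (Suc i) j \<and> jr P (Suc i) j"
proof (induction i arbitrary: j)
  case 0
  then have "a 0 j = a 0 (j + 1)" using ext_0_eq_ent[of j] ext_0_eq_ent[of "j + 1"] by (simp add: coord_dom_def)
  then show ?case using top_equal_joined 0 by (simp add: coord_dom_def)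
next
  case (Suc i)
  have c: "coord_dom n (Suc i) j" "coord_dom n (Suc i) (j + 1)"
    using Suc.prems(1) by (auto simp: coord_dom_def)
  have ties: "y (Suc i) j = Y i (j + 1)" "y (Suc i) (j + 1) = Y i (j + 1)"
    using interlacing[OF c(1)] interlacing[OF c(2)] Suc.prems(2) by auto
  have "jr P (Suc i) j" using tie_right_joined[OF c(1) ties(1)] Suc.IH[OF c(1)] by blast
  moreover have "jl P (Suc i) (j + 1)" using tie_left_joined[OF c(2) ties(2)] Suc.IH[OF c(2)] by simp
  ultimately show ?case
    using double_edges_down[of "Suc i" j] c by (simp add: coord_dom_def pat_dom_def)
qed

lemma joined_left_iff: "jl P i j \<longleftrightarrow> coord_dom n i j \<and> y i j = Y (i - 1) j"
proof (cases "coord_dom n i j")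
  case True
  then obtain k where i: "i = Suc k" and c: "coord_dom n (Suc k) j" by (cases i) (auto simp: coord_dom_def)
  show ?thesis
  proof
    assume "jl P i j"
    then show "coord_dom n i j \<and> y i j = Y (i - 1) j" using True cell_joined_left by blast
  next
    assume "coord_dom n i j \<and> y i j = Y (i - 1) j"
    then have "y (Suc k) j = Y k j" by (simp add: i)
    then show "jl P i j" unfolding i using tie_left_joined[OF c] neighbours_eq_joined[OF c] by blast
  qed
qed (use edges_outside in blast)

lemma joined_right_iff: "jr P i j \<longleftrightarrow> coord_dom n i j \<and> y i j = Y (i - 1) (j + 1)"
proof (cases "coord_dom n i j")
  case True
  then obtain k where i: "i = Suc k" and c: "coord_dom n (Suc k) j" by (cases i) (auto simp: coord_dom_def)
  show ?thesis
  proof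
    assume "jr P i j"
    then show "coord_dom n i j \<and> y i j = Y (i - 1) (j + 1)" using True cell_joined_right by blast
  next
    assume "coord_dom n i j \<and> y i j = Y (i - 1) (j + 1)"
    then have "y (Suc k) j = Y k (j + 1)" by (simp add: i)
    then show "jr P i j" unfolding i using tie_right_joined[OF c] neighbours_eq_joined[OF c] by blast
  qed
qed (use edges_outside in blast)

lemma free_circ_ent:
  assumes c: "coord_dom n (Suc k) j" and free: "\<not> jl P (Suc k) j" "\<not> jr P (Suc k) j"
    and circ: "circ P (Suc k) j"
  shows "y (Suc k) j = of_int (a (Suc k) j) \<and> a k j < a (Suc k) j"
proof -
  have "a (Suc k) j \<noteq> a k j"
  proof
    assume eq: "a (Suc k) j = a k j"
    show False
    proof (cases "a k j < a k (j + 1)")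
      case True
      then show False using left_equal_joined[OF c] eq free by simp
    next
      case False
      then have "a k j = a k (j + 1)" using ent_interlacing[OF c] by simp
      then show False using flat_circ_joined[OF c] eq free circ by simp
    qed
  qed
  then show ?thesis using cell_free_circ[OF c free circ] ent_interlacing[OF c] by simp
qed

lemma free_open_ent:
  assumes c: "coord_dom n (Suc k) j" and free: "\<not> jl P (Suc k) j" "\<not> jr P (Suc k) j" "\<not> circ P (Suc k) j"
  shows "next_entry (Y k j) (Y k (j + 1)) (y (Suc k) j) (a k j) (a k (j + 1)) = a (Suc k) j \<and>
    \<not> (y (Suc k) j \<in> \<int> \<and> of_int (a k j) < y (Suc k) j)"
proof -
  have no_tie: "y (Suc k) j \<noteq> Y k j" "y (Suc k) j \<noteq> Y k (j + 1)"
    using free joined_left_iff joined_right_iff c by auto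
  note cell = cell_open[OF c free, simplified]
  have "Y k (j + 1) \<le> of_int (a k (j + 1))" using ext_le_ent c by (simp add: coord_dom_def pat_dom_def)
  then have below: "y (Suc k) j < of_int (a (Suc k) j)" using cell by (auto split: if_splits)
  have flat: "a (Suc k) j = a k j \<Longrightarrow> a k j = a k (j + 1)"
    using left_equal_joined[OF c] free(1) ent_interlacing[OF c] by force
  show ?thesis
    using next_entry_eqI[OF no_tie _ _ below _ flat] ent_interlacing[OF c] cell by simp
qed

lemma ent_row_step:
  assumes c: "coord_dom n (Suc k) j"
  shows "a (Suc k) j = next_entry (Y k j) (Y k (j + 1)) (y (Suc k) j) (a k j) (a k (j + 1)) \<and>
    (circ P (Suc k) j \<longleftrightarrow> y (Suc k) j = Y k j \<or> y (Suc k) j = Y k (j + 1) \<or>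
      (y (Suc k) j \<in> \<int> \<and> of_int (a k j) < y (Suc k) j))"
proof -
  let ?v = "y (Suc k) j"
  consider (left) "?v = Y k j" | (right) "?v \<noteq> Y k j" "?v = Y k (j + 1)"
    | (free) "?v \<noteq> Y k j" "?v \<noteq> Y k (j + 1)" by blast
  then show ?thesis
  proof cases
    case left
    then have "jl P (Suc k) j" using joined_left_iff c by simp
    then show ?thesis using joined_left_ent left by (simp add: next_entry_def)
  next
    case right
    then have "jr P (Suc k) j" using joined_right_iff c by simp
    then show ?thesis using joined_right_ent right by (simp add: next_entry_def)
  next
    case free
    then have edges: "\<not> jl P (Suc k) j" "\<not> jr P (Suc k) j" using joined_left_iff joined_right_iff by auto
    show ?thesis
    proof (cases "circ P (Suc k) j")
      case True
      then have "?v = of_int (a (Suc k) j)" "a k j < a (Suc k) j" using free_circ_ent[OF c edges] by auto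
      then show ?thesis using next_entry_integer[OF free] True by simp
    next
      case False
      then show ?thesis using free_open_ent[OF c edges False] free by auto
    qed
  qed
qed

lemma ent_eq_canon_ent: "a i j = A i j"
proof (induction i arbitrary: j)
  case 0
  show ?case using ent_row0 ent_outside[of 0 j] by (auto simp: pat_dom_def)
next
  case (Suc k)
  show ?case
  proof (cases "pat_dom n (Suc k) j")
    case True
    then have c: "coord_dom n (Suc k) j" by (simp add: coord_dom_iff_pat_dom)
    show ?thesis using ent_row_step[OF c] canon_ent_Suc[OF c] Suc.IH by simp
  qed (simp add: ent_outside)
qed

lemma circ_eq_canon: "circ P i j = circ canon i j"
proof (cases "pat_dom n i j")
  case True
  show ?thesis
  proof (cases i)
    case 0
    then show ?thesis using True circ_row0 by (simp add: canon_pattern_def)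
  next
    case (Suc k)
    then have "coord_dom n (Suc k) j" using True by (simp add: coord_dom_iff_pat_dom)
    then show ?thesis using ent_row_step Suc True ent_eq_canon_ent by (simp add: canon_pattern_def)
  qed
qed (simp add: circ_outside canon_pattern_def)

lemma eq_canon_pattern: "P = canon"
proof (rule epat.equality)
  show "ent P = ent canon" by (intro ext) (simp add: ent_eq_canon_ent)
  show "circ P = circ canon" by (intro ext) (rule circ_eq_canon)
  show "jl P = jl canon" by (intro ext) (simp add: joined_left_iff canon_pattern_def)
  show "jr P = jr canon" by (intro ext) (simp add: joined_right_iff canon_pattern_def)
qed simp

end

theorem lemma5p1:
  fixes n :: nat and lam :: "nat \<Rightarrow> int" and y :: "nat \<Rightarrow> nat \<Rightarrow> real"
  assumes partition: "\<forall>i. 1 \<le> i \<and> i < n \<longrightarrow> lam (i + 1) \<le> lam i"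
      and nonneg: "\<forall>i. 1 \<le> i \<and> i \<le> n \<longrightarrow> 0 \<le> lam i"
      and y: "y \<in> GZ n lam"
  shows "\<exists>!P. enhanced_GZ n lam P \<and> y \<in> cell n lam P"
proof -
  interpret gz_point n lam y using partition y by unfold_locales
  show ?thesis
  proof (rule ex1I)
    show "enhanced_GZ n lam canon \<and> y \<in> cell n lam canon"
      using enhanced_canon_pattern canon_in_cell by blast
  next
    fix P assume "enhanced_GZ n lam P \<and> y \<in> cell n lam P"
    then interpret gz_cell n lam y P by unfold_locales auto
    show "P = canon" by (rule eq_canon_pattern)
  qed
qed

end
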